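(* Let $G$ be a connected simple graph in which every vertex has odd degree, and let $m=|E(G)|$. Let $f_G$ and $\tilde f_G$ be the formulas defined below. If $m$ is even, then $f_G$ is satisfiable and $\tilde f_G$ is unsatisfiable; if $m$ is odd, then $f_G$ is unsatisfiable and $\tilde f_G$ is satisfiable.
   Context: Construction of $f_G$: for each edge $e=\{v,w\}$ of $G$ introduce two variables and literals $a^{v,w},b^{v,w}$ (literals on $v$'s side) with $a^{w,v}=\neg a^{v,w}$ and $b^{w,v}=\neg b^{v,w}$ (literals on $w$'s side). For each vertex $v$ with incident edges $\{v,w_1\},\dots,\{v,w_k\}$ ($k=d(v)$), write $a_i=a^{v,w_i}$, $b_i=b^{v,w_i}$ and add the clauses $(\bigvee_{i\in S}a_i)\vee(\bigvee_{i\in[k]\setminus S}b_i)$ for every $S\subseteq[k]$ with $|S|$ even, together with the clauses $a_i\vee b_i$ for $1\le i\le k$. The formula $f_G$ is the conjunction of all these clauses over all vertices. The twisted formula $\tilde f_G$ is obtained in the same way, except that for one arbitrarily chosen edge $\{v_0,w_0\}$ the negation pairing is twisted: $a^{v_0,w_0}=\neg b^{w_0,v_0}$ and $b^{v_0,w_0}=\neg a^{w_0,v_0}$ (all other edges as before). *)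

theory Defs
  imports Main
begin

definition simple_graph :: "'a set \<Rightarrow> ('a \<Rightarrow> 'a \<Rightarrow> bool) \<Rightarrow> bool" where
  "simple_graph V E \<longleftrightarrow> finite V \<and> (\<forall>v w. E v w \<longrightarrow> v \<in> V \<and> w \<in> V \<and> E w v \<and> v \<noteq> w)"

definition connected_graph :: "'a set \<Rightarrow> ('a \<Rightarrow> 'a \<Rightarrow> bool) \<Rightarrow> bool" where
  "connected_graph V E \<longleftrightarrow> V \<noteq> {} \<and> (\<forall>u\<in>V. \<forall>w\<in>V. E\<^sup>*\<^sup>* u w)"

definition nbrs :: "'a set \<Rightarrow> ('a \<Rightarrow> 'a \<Rightarrow> bool) \<Rightarrow> 'a \<Rightarrow> 'a set" where
  "nbrs V E v = {w \<in> V. E v w}"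

definition degree :: "'a set \<Rightarrow> ('a \<Rightarrow> 'a \<Rightarrow> bool) \<Rightarrow> 'a \<Rightarrow> nat" where
  "degree V E v = card (nbrs V E v)"

definition edges :: "'a set \<Rightarrow> ('a \<Rightarrow> 'a \<Rightarrow> bool) \<Rightarrow> 'a set set" where
  "edges V E = {{v, w} | v w. v \<in> V \<and> w \<in> V \<and> E v w}"

datatype 'v lit = Pos 'v | Neg 'v

fun lit_val :: "('v \<Rightarrow> bool) \<Rightarrow> 'v lit \<Rightarrow> bool" where
  "lit_val \<sigma> (Pos x) = \<sigma> x"
| "lit_val \<sigma> (Neg x) = (\<not> \<sigma> x)"

definition satisfiable :: "'v lit set set \<Rightarrow> bool" where
  "satisfiable F \<longleftrightarrow> (\<exists>\<sigma>. \<forall>C\<in>F. \<exists>l\<in>C. lit_val \<sigma> l)"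

text \<open>Variables: for the edge {v,w} oriented as (v,w) (ori v w), the two variables are
  (v,w,True) (the "a" variable) and (v,w,False) (the "b" variable).
  Literal a^{v,w} is the positive variable on the owning side and its negation on the other side.\<close>

definition orientation :: "('a \<Rightarrow> 'a \<Rightarrow> bool) \<Rightarrow> ('a \<Rightarrow> 'a \<Rightarrow> bool) \<Rightarrow> bool" where
  "orientation E ori \<longleftrightarrow> (\<forall>v w. E v w \<longrightarrow> (ori v w \<longleftrightarrow> \<not> ori w v))"

definition alit :: "('a \<Rightarrow> 'a \<Rightarrow> bool) \<Rightarrow> 'a \<Rightarrow> 'a \<Rightarrow> ('a \<times> 'a \<times> bool) lit" where
  "alit ori v w = (if ori v w then Pos (v, w, True) else Neg (w, v, True))"

definition blit :: "('a \<Rightarrow> 'a \<Rightarrow> bool) \<Rightarrow> 'a \<Rightarrow> 'a \<Rightarrow> ('a \<times> 'a \<times> bool) lit" where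
  "blit ori v w = (if ori v w then Pos (v, w, False) else Neg (w, v, False))"

text \<open>Twisted literals at edge {v0,w0}: a^{v,w} = \<not> b^{w,v}, b^{v,w} = \<not> a^{w,v}.\<close>

definition talit :: "('a \<Rightarrow> 'a \<Rightarrow> bool) \<Rightarrow> 'a \<Rightarrow> 'a \<Rightarrow> 'a \<Rightarrow> 'a \<Rightarrow> ('a \<times> 'a \<times> bool) lit" where
  "talit ori v0 w0 v w = (if {v, w} = {v0, w0}
      then (if ori v w then Pos (v, w, True) else Neg (w, v, False))
      else alit ori v w)"

definition tblit :: "('a \<Rightarrow> 'a \<Rightarrow> bool) \<Rightarrow> 'a \<Rightarrow> 'a \<Rightarrow> 'a \<Rightarrow> 'a \<Rightarrow> ('a \<times> 'a \<times> bool) lit" where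
  "tblit ori v0 w0 v w = (if {v, w} = {v0, w0}
      then (if ori v w then Pos (v, w, False) else Neg (w, v, True))
      else blit ori v w)"

text \<open>The clauses of the formula, given the literal maps la v w = a^{v,w}, lb v w = b^{v,w}.
  Incident edges of v are indexed by its neighbours (equivalent to indexing by [k] in a simple graph).\<close>

definition vertex_clauses :: "'a set \<Rightarrow> ('a \<Rightarrow> 'a \<Rightarrow> bool) \<Rightarrow> ('a \<Rightarrow> 'a \<Rightarrow> 'l) \<Rightarrow> ('a \<Rightarrow> 'a \<Rightarrow> 'l)
    \<Rightarrow> 'a \<Rightarrow> 'l set set" where
  "vertex_clauses V E la lb v =
     {la v ` S \<union> lb v ` (nbrs V E v - S) | S. S \<subseteq> nbrs V E v \<and> even (card S)}
     \<union> {{la v w, lb v w} | w. w \<in> nbrs V E v}"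

definition graph_formula :: "'a set \<Rightarrow> ('a \<Rightarrow> 'a \<Rightarrow> bool) \<Rightarrow> ('a \<Rightarrow> 'a \<Rightarrow> 'l) \<Rightarrow> ('a \<Rightarrow> 'a \<Rightarrow> 'l)
    \<Rightarrow> 'l set set" where
  "graph_formula V E la lb = (\<Union>v\<in>V. vertex_clauses V E la lb v)"

definition f_G :: "'a set \<Rightarrow> ('a \<Rightarrow> 'a \<Rightarrow> bool) \<Rightarrow> ('a \<Rightarrow> 'a \<Rightarrow> bool) \<Rightarrow> ('a \<times> 'a \<times> bool) lit set set" where
  "f_G V E ori = graph_formula V E (alit ori) (blit ori)"

definition twisted_f_G :: "'a set \<Rightarrow> ('a \<Rightarrow> 'a \<Rightarrow> bool) \<Rightarrow> ('a \<Rightarrow> 'a \<Rightarrow> bool) \<Rightarrow> 'a \<Rightarrow> 'a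
    \<Rightarrow> ('a \<times> 'a \<times> bool) lit set set" where
  "twisted_f_G V E ori v0 w0 = graph_formula V E (talit ori v0 w0) (tblit ori v0 w0)"

end

theory Submission
  imports Defs
begin

text \<open>A satisfying assignment must give a^{v,w} and b^{v,w} opposite values, since the clause
  a or b at v reappears negated at w. Given that, the even-S clauses at v say precisely that an
  odd number of the a-literals at v are false. Summing over the vertices, whose number is even
  by the handshake lemma, the total number of false a-literals is even. In f_G every edge
  contributes exactly one false a-literal, m in total; in the twisted formula the twisted edge
  contributes 0 or 2 and the total is m - 1 or m + 1. Conversely, take any assignment with
  a \<noteq> b whose total has the right parity; the set T of vertices where it has the wrong
  parity then has even size, and flipping both literals along the edges of a T-join, which
  exists because G is connected, yields a satisfying assignment.\<close>

lemma odd_card_filter_xor: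
  assumes "finite N"
  shows "odd (card {w\<in>N. P w \<noteq> Q w}) \<longleftrightarrow> odd (card {w\<in>N. P w}) \<noteq> odd (card {w\<in>N. Q w})"
proof -
  let ?A = "{w\<in>N. P w}" and ?B = "{w\<in>N. Q w}"
  have "card {w\<in>N. P w \<noteq> Q w} + card (?A \<inter> ?B) = card (?A \<union> ?B)"
    using assms by (subst card_Un_disjoint[symmetric]) (auto intro: arg_cong[where f = card])
  moreover have "card (?A \<union> ?B) + card (?A \<inter> ?B) = card ?A + card ?B"
    using assms by (intro card_Un_Int[symmetric]) auto
  ultimately show ?thesis by presburger
qed

lemma finite_nbrs: "simple_graph V E \<Longrightarrow> finite (nbrs V E v)"
  unfolding simple_graph_def nbrs_def by auto

lemma finite_edges: "simple_graph V E \<Longrightarrow> finite (edges V E)"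
  unfolding simple_graph_def edges_def
  by (rule finite_subset[of _ "Pow V"]) auto

lemma sum_card_nbrs_eq_sum_edges:
  assumes "simple_graph V E"
  shows "(\<Sum>v\<in>V. card {w\<in>nbrs V E v. g v w})
       = (\<Sum>e\<in>edges V E. card {(v, w). E v w \<and> g v w \<and> {v, w} = e})"
proof -
  let ?arcs = "{(v, w). E v w \<and> g v w}"
  have fin_V: "finite V" using assms unfolding simple_graph_def by simp
  have "?arcs = (SIGMA v:V. {w\<in>nbrs V E v. g v w})"
    using assms unfolding simple_graph_def nbrs_def by auto
  then have "(\<Sum>v\<in>V. card {w\<in>nbrs V E v. g v w}) = card ?arcs"
    using fin_V finite_nbrs[OF assms] by simp
  also have "\<dots> = (\<Sum>e\<in>edges V E. card {p\<in>?arcs. (\<lambda>(v, w). {v, w}) p = e})"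
    unfolding card_eq_sum
  proof (rule sum.group[symmetric])
    show "finite ?arcs"
      using assms unfolding simple_graph_def by (auto intro: finite_subset[of _ "V \<times> V"])
    show "(\<lambda>(v, w). {v, w}) ` ?arcs \<subseteq> edges V E"
      using assms unfolding simple_graph_def edges_def by auto
  qed (rule finite_edges[OF assms])
  also have "\<dots> = (\<Sum>e\<in>edges V E. card {(v, w). E v w \<and> g v w \<and> {v, w} = e})"
    by (intro sum.cong refl arg_cong[where f = card]) auto
  finally show ?thesis .
qed

lemma card_arcs_of_edge:
  assumes "simple_graph V E" and "E v w"
  shows "card {(x, y). E x y \<and> g x y \<and> {x, y} = {v, w}} = of_bool (g v w) + of_bool (g w v)"
proof -
  have "v \<noteq> w" "E w v" using assms unfolding simple_graph_def by auto
  then have "{(x, y). E x y \<and> g x y \<and> {x, y} = {v, w}}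
           = (if g v w then {(v, w)} else {}) \<union> (if g w v then {(w, v)} else {})"
    using assms(2) by (auto simp: doubleton_eq_iff)
  then show ?thesis using \<open>v \<noteq> w\<close> by simp
qed

lemma edgeE:
  assumes "e \<in> edges V E"
  obtains v w where "e = {v, w}" and "E v w"
  using assms unfolding edges_def by blast

lemma sum_degree_eq_twice_card_edges:
  assumes "simple_graph V E"
  shows "(\<Sum>v\<in>V. degree V E v) = 2 * card (edges V E)"
proof -
  have "(\<Sum>v\<in>V. degree V E v) = (\<Sum>e\<in>edges V E. card {(v, w). E v w \<and> True \<and> {v, w} = e})"
    unfolding degree_def using sum_card_nbrs_eq_sum_edges[OF assms, of "\<lambda>_ _. True"] by simp
  also have "\<dots> = (\<Sum>e\<in>edges V E. 2)"
  proof (rule sum.cong[OF refl], erule edgeE)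
    fix e v w assume "e = {v, w}" and "E v w"
    then show "card {(x, y). E x y \<and> True \<and> {x, y} = e} = 2"
      using card_arcs_of_edge[OF assms \<open>E v w\<close>, of "\<lambda>_ _. True"] by simp
  qed
  finally show ?thesis by simp
qed

lemma even_sum_iff_even_card:
  fixes f :: "'a \<Rightarrow> 'b::semiring_parity"
  assumes "finite A" and "\<forall>a\<in>A. odd (f a)"
  shows "even (sum f A) \<longleftrightarrow> even (card A)"
proof -
  have "{a\<in>A. odd (f a)} = A" using assms(2) by auto
  then show ?thesis using even_sum_iff[OF assms(1), of f] by simp
qed

lemma even_card_if_odd_degrees:
  assumes "simple_graph V E" and "\<forall>v\<in>V. odd (degree V E v)"
  shows "even (card V)"
proof -
  have "finite V" using assms(1) unfolding simple_graph_def by simp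
  then show ?thesis
    using even_sum_iff_even_card[of V "degree V E"] assms(2) sum_degree_eq_twice_card_edges[OF assms(1)]
    by simp
qed

lemma sum_card_nbrs_antisym:
  assumes "simple_graph V E" and "\<And>v w. E v w \<Longrightarrow> g w v \<longleftrightarrow> \<not> g v w"
  shows "(\<Sum>v\<in>V. card {w\<in>nbrs V E v. g v w}) = card (edges V E)"
proof -
  have "(\<Sum>v\<in>V. card {w\<in>nbrs V E v. g v w}) = (\<Sum>e\<in>edges V E. 1)"
    unfolding sum_card_nbrs_eq_sum_edges[OF assms(1)]
    by (rule sum.cong[OF refl], erule edgeE) (simp add: card_arcs_of_edge[OF assms(1)] assms(2))
  then show ?thesis by simp
qed

lemma sum_card_nbrs_antisym_except:
  assumes "simple_graph V E" and "E v0 w0"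
    and "\<And>v w. E v w \<Longrightarrow> {v, w} \<noteq> {v0, w0} \<Longrightarrow> g w v \<longleftrightarrow> \<not> g v w"
  shows "(\<Sum>v\<in>V. card {w\<in>nbrs V E v. g v w}) + 1
       = of_bool (g v0 w0) + of_bool (g w0 v0) + card (edges V E)"
proof -
  let ?e0 = "{v0, w0}"
  have e0: "?e0 \<in> edges V E"
    using assms(1,2) unfolding simple_graph_def edges_def by blast
  have "(\<Sum>v\<in>V. card {w\<in>nbrs V E v. g v w})
      = card {(v, w). E v w \<and> g v w \<and> {v, w} = ?e0}
        + (\<Sum>e\<in>edges V E - {?e0}. card {(v, w). E v w \<and> g v w \<and> {v, w} = e})"
    unfolding sum_card_nbrs_eq_sum_edges[OF assms(1)]
    using finite_edges[OF assms(1)] e0 by (rule sum.remove)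
  also have "(\<Sum>e\<in>edges V E - {?e0}. card {(v, w). E v w \<and> g v w \<and> {v, w} = e})
           = (\<Sum>e\<in>edges V E - {?e0}. 1)"
    by (rule sum.cong[OF refl], elim DiffE edgeE)
      (simp add: card_arcs_of_edge[OF assms(1)] assms(3))
  finally have "(\<Sum>v\<in>V. card {w\<in>nbrs V E v. g v w})
      = of_bool (g v0 w0) + of_bool (g w0 v0) + (card (edges V E) - 1)"
    using e0 by (simp add: card_arcs_of_edge[OF assms(1,2)])
  moreover have "card (edges V E) \<noteq> 0"
    using e0 finite_edges[OF assms(1)] by auto
  ultimately show ?thesis by simp
qed

text \<open>\<open>is_join V E F P\<close>: the symmetric relation F, read as a set of edges, is a T-join for
  \<open>T = {v. P v}\<close>.\<close>

definition is_join ::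
    "'a set \<Rightarrow> ('a \<Rightarrow> 'a \<Rightarrow> bool) \<Rightarrow> ('a \<Rightarrow> 'a \<Rightarrow> bool) \<Rightarrow> ('a \<Rightarrow> bool) \<Rightarrow> bool" where
  "is_join V E F P \<longleftrightarrow> symp F \<and> (\<forall>v\<in>V. odd (card {w\<in>nbrs V E v. F v w}) \<longleftrightarrow> P v)"

lemma is_join_empty: "is_join V E (\<lambda>_ _. False) (\<lambda>_. False)"
  by (simp add: is_join_def symp_def)

lemma is_join_cong: "is_join V E F P \<Longrightarrow> (\<And>v. v \<in> V \<Longrightarrow> P v \<longleftrightarrow> Q v) \<Longrightarrow> is_join V E F Q"
  by (simp add: is_join_def)

lemma is_join_xor:
  assumes "simple_graph V E" and "is_join V E F P" and "is_join V E G Q"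
  shows "is_join V E (\<lambda>x y. F x y \<noteq> G x y) (\<lambda>v. P v \<noteq> Q v)"
  using assms odd_card_filter_xor[OF finite_nbrs[OF assms(1)]]
  unfolding is_join_def symp_def by blast

lemma exists_path_join:
  assumes "simple_graph V E" and "E\<^sup>*\<^sup>* s t"
  shows "\<exists>F. is_join V E F (\<lambda>v. (v = s) \<noteq> (v = t))"
  using assms(2)
proof (induction rule: rtranclp_induct)
  case base
  show ?case using is_join_empty by auto
next
  case (step u t)
  then obtain F where F: "is_join V E F (\<lambda>v. (v = s) \<noteq> (v = u))"
    by blast
  define ut where "ut x y \<longleftrightarrow> {x, y} = {u, t}" for x y
  have "u \<noteq> t" "E t u"
    using step.hyps(2) assms(1) unfolding simple_graph_def by auto
  then have "{w\<in>nbrs V E v. ut v w} = (if v = u then {t} else if v = t then {u} else {})"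
    if "v \<in> V" for v
    using step.hyps(2) assms(1) that unfolding ut_def nbrs_def simple_graph_def doubleton_eq_iff
    by auto
  then have "is_join V E ut (\<lambda>v. (v = u) \<noteq> (v = t))"
    using \<open>u \<noteq> t\<close> unfolding is_join_def symp_def ut_def by (simp add: insert_commute)
  then have "is_join V E (\<lambda>x y. F x y \<noteq> ut x y)
      (\<lambda>v. ((v = s) \<noteq> (v = u)) \<noteq> ((v = u) \<noteq> (v = t)))"
    by (rule is_join_xor[OF assms(1) F])
  then have "is_join V E (\<lambda>x y. F x y \<noteq> ut x y) (\<lambda>v. (v = s) \<noteq> (v = t))"
    by (rule is_join_cong) auto
  then show ?case by blast
qed

lemma exists_join:
  assumes "simple_graph V E" and "connected_graph V E" and "T \<subseteq> V" and "even (card T)"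
  shows "\<exists>F. is_join V E F (\<lambda>v. v \<in> T)"
proof -
  obtain r where "r \<in> V" using assms(2) unfolding connected_graph_def by blast
  \<comment> \<open>Joining every vertex of S to a root r leaves r with the parity of card S.\<close>
  have root_join: "\<exists>F. is_join V E F (\<lambda>v. (v \<in> S) \<noteq> (v = r \<and> odd (card S)))"
    if "finite S" and "S \<subseteq> V" for S
    using that
  proof (induction S rule: finite_induct)
    case empty
    show ?case using is_join_empty by auto
  next
    case (insert t S)
    obtain F where "is_join V E F (\<lambda>v. (v \<in> S) \<noteq> (v = r \<and> odd (card S)))"
      using insert by blast
    moreover have "E\<^sup>*\<^sup>* r t"
      using assms(2) \<open>r \<in> V\<close> insert.prems unfolding connected_graph_def by blast
    then obtain P where "is_join V E P (\<lambda>v. (v = r) \<noteq> (v = t))"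
      using exists_path_join[OF assms(1)] by blast
    ultimately have "is_join V E (\<lambda>x y. F x y \<noteq> P x y)
        (\<lambda>v. ((v \<in> S) \<noteq> (v = r \<and> odd (card S))) \<noteq> ((v = r) \<noteq> (v = t)))"
      by (rule is_join_xor[OF assms(1)])
    then have "is_join V E (\<lambda>x y. F x y \<noteq> P x y)
        (\<lambda>v. (v \<in> insert t S) \<noteq> (v = r \<and> odd (card (insert t S))))"
      by (rule is_join_cong) (use insert.hyps in auto)
    then show ?case by blast
  qed
  have "finite T"
    using assms(1,3) finite_subset unfolding simple_graph_def by blast
  with root_join[OF _ assms(3)] assms(4) show ?thesis by simp
qed

lemma exists_parity_correction:
  assumes "simple_graph V E" and "connected_graph V E" and "even (card V)"
    and "even (\<Sum>v\<in>V. card {w\<in>nbrs V E v. g v w})"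
  shows "\<exists>F. symp F \<and> (\<forall>v\<in>V. odd (card {w\<in>nbrs V E v. g v w \<noteq> F v w}))"
proof -
  let ?c = "\<lambda>v. card {w\<in>nbrs V E v. g v w}"
  let ?T = "{v\<in>V. even (?c v)}"
  have "finite V" using assms(1) unfolding simple_graph_def by simp
  \<comment> \<open>T consists of the vertices where \<open>?c v + 1\<close> is odd.\<close>
  have "(\<Sum>v\<in>V. ?c v + 1) = (\<Sum>v\<in>V. ?c v) + card V"
    by (simp only: sum.distrib) simp
  then have "even (\<Sum>v\<in>V. ?c v + 1)"
    using assms(3,4) by (simp only:) simp
  then have "even (card {v\<in>V. odd (?c v + 1)})"
    by (simp only: even_sum_iff[OF \<open>finite V\<close>])
  moreover have "{v\<in>V. odd (?c v + 1)} = ?T" by simp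
  ultimately have "even (card ?T)" by (simp only:)
  moreover have "?T \<subseteq> V" by blast
  ultimately obtain F where "is_join V E F (\<lambda>v. v \<in> ?T)"
    using exists_join[OF assms(1,2)] by blast
  then have "symp F" and F: "\<forall>v\<in>V. odd (card {w\<in>nbrs V E v. F v w}) \<longleftrightarrow> v \<in> ?T"
    unfolding is_join_def by blast+
  have "odd (card {w\<in>nbrs V E v. g v w \<noteq> F v w})" if "v \<in> V" for v
    using odd_card_filter_xor[OF finite_nbrs[OF assms(1)], of v "g v" "F v"] F that by simp
  with \<open>symp F\<close> show ?thesis by blast
qed

fun negate :: "'v lit \<Rightarrow> 'v lit" where
  "negate (Pos x) = Neg x"
| "negate (Neg x) = Pos x"

lemma lit_val_negate [simp]: "lit_val \<sigma> (negate l) \<longleftrightarrow> \<not> lit_val \<sigma> l"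
  by (cases l) simp_all

definition models :: "('v \<Rightarrow> bool) \<Rightarrow> 'v lit set set \<Rightarrow> bool" where
  "models \<sigma> F \<longleftrightarrow> (\<forall>C\<in>F. \<exists>l\<in>C. lit_val \<sigma> l)"

lemma satisfiable_iff_models: "satisfiable F \<longleftrightarrow> (\<exists>\<sigma>. models \<sigma> F)"
  by (simp add: satisfiable_def models_def)

lemma models_vertex_clauses_iff:
  assumes "\<forall>w\<in>nbrs V E v. lit_val \<sigma> (la v w) \<noteq> lit_val \<sigma> (lb v w)"
  shows "models \<sigma> (vertex_clauses V E la lb v)
    \<longleftrightarrow> odd (card {w\<in>nbrs V E v. \<not> lit_val \<sigma> (la v w)})"
proof -
  let ?N = "nbrs V E v"
  let ?S0 = "{w\<in>?N. \<not> lit_val \<sigma> (la v w)}"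
  have parity_clause: "(\<exists>l\<in>la v ` S \<union> lb v ` (?N - S). lit_val \<sigma> l) \<longleftrightarrow> S \<noteq> ?S0"
    if "S \<subseteq> ?N" for S
    using that assms by auto
  show ?thesis
  proof
    assume models: "models \<sigma> (vertex_clauses V E la lb v)"
    show "odd (card ?S0)"
    proof
      assume "even (card ?S0)"
      then have "la v ` ?S0 \<union> lb v ` (?N - ?S0) \<in> vertex_clauses V E la lb v"
        unfolding vertex_clauses_def by (intro UnI1 CollectI exI[of _ ?S0] conjI refl) auto
      with models parity_clause[of ?S0] show False
        unfolding models_def by blast
    qed
  next
    assume "odd (card ?S0)"
    show "models \<sigma> (vertex_clauses V E la lb v)"
      unfolding models_def
    proof
      fix C assume "C \<in> vertex_clauses V E la lb v"
      then consider (parity) S where "C = la v ` S \<union> lb v ` (?N - S)" "S \<subseteq> ?N" "even (card S)"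
        | (pair) w where "C = {la v w, lb v w}" "w \<in> ?N"
        unfolding vertex_clauses_def by blast
      then show "\<exists>l\<in>C. lit_val \<sigma> l"
      proof cases
        case parity
        then show ?thesis using parity_clause \<open>odd (card ?S0)\<close> by blast
      next
        case pair
        then show ?thesis using assms by auto
      qed
    qed
  qed
qed

lemma models_graph_formula:
  "models \<sigma> (graph_formula V E la lb) \<longleftrightarrow> (\<forall>v\<in>V. models \<sigma> (vertex_clauses V E la lb v))"
  unfolding models_def graph_formula_def by blast

lemma models_pair_clause:
  assumes "simple_graph V E" and "models \<sigma> (graph_formula V E la lb)" and "E v w"
  shows "lit_val \<sigma> (la v w) \<or> lit_val \<sigma> (lb v w)"
proof -
  have "v \<in> V" "w \<in> V" using assms(1,3) unfolding simple_graph_def by blast+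
  then have "{la v w, lb v w} \<in> vertex_clauses V E la lb v"
    unfolding vertex_clauses_def using assms(3)
    by (intro UnI2 CollectI exI[of _ w] conjI refl) (simp add: nbrs_def)
  moreover have "models \<sigma> (vertex_clauses V E la lb v)"
    using assms(2) \<open>v \<in> V\<close> unfolding models_graph_formula by blast
  ultimately have "\<exists>l\<in>{la v w, lb v w}. lit_val \<sigma> l"
    unfolding models_def by blast
  then show ?thesis by simp
qed

text \<open>Hypothesis \<open>complementary\<close> holds for the literals of f_G and, crosswise on the
  twisted edge, for those of the twisted formula.\<close>

lemma models_graph_formula_iff:
  assumes "simple_graph V E"
    and complementary: "\<And>v w. E v w \<Longrightarrow> {la w v, lb w v} = negate ` {la v w, lb v w}"
  shows "models \<sigma> (graph_formula V E la lb) \<longleftrightarrow>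
    (\<forall>v w. E v w \<longrightarrow> lit_val \<sigma> (la v w) \<noteq> lit_val \<sigma> (lb v w)) \<and>
    (\<forall>v\<in>V. odd (card {w\<in>nbrs V E v. \<not> lit_val \<sigma> (la v w)}))"
proof -
  have vertex_iff: "models \<sigma> (vertex_clauses V E la lb v)
      \<longleftrightarrow> odd (card {w\<in>nbrs V E v. \<not> lit_val \<sigma> (la v w)})"
    if "\<forall>w. E v w \<longrightarrow> lit_val \<sigma> (la v w) \<noteq> lit_val \<sigma> (lb v w)" for v
    using that by (intro models_vertex_clauses_iff) (simp add: nbrs_def)
  show ?thesis
  proof
    assume models: "models \<sigma> (graph_formula V E la lb)"
    have "lit_val \<sigma> (la v w) \<noteq> lit_val \<sigma> (lb v w)" if "E v w" for v w
    proof -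
      have "E w v" using assms(1) that unfolding simple_graph_def by blast
      then have "\<exists>l\<in>{la w v, lb w v}. lit_val \<sigma> l"
        using models_pair_clause[OF assms(1) models] by simp
      then have "\<exists>l\<in>negate ` {la v w, lb v w}. lit_val \<sigma> l"
        by (simp only: complementary[OF that])
      then show ?thesis
        using models_pair_clause[OF assms(1) models that] by auto
    qed
    with models vertex_iff show "(\<forall>v w. E v w \<longrightarrow> lit_val \<sigma> (la v w) \<noteq> lit_val \<sigma> (lb v w)) \<and>
        (\<forall>v\<in>V. odd (card {w\<in>nbrs V E v. \<not> lit_val \<sigma> (la v w)}))"
      unfolding models_graph_formula by blast
  next
    assume "(\<forall>v w. E v w \<longrightarrow> lit_val \<sigma> (la v w) \<noteq> lit_val \<sigma> (lb v w)) \<and>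
        (\<forall>v\<in>V. odd (card {w\<in>nbrs V E v. \<not> lit_val \<sigma> (la v w)}))"
    with vertex_iff show "models \<sigma> (graph_formula V E la lb)"
      unfolding models_graph_formula by blast
  qed
qed

lemma alit_swap: "orientation E ori \<Longrightarrow> E v w \<Longrightarrow> alit ori w v = negate (alit ori v w)"
  unfolding orientation_def alit_def by auto

lemma blit_swap: "orientation E ori \<Longrightarrow> E v w \<Longrightarrow> blit ori w v = negate (blit ori v w)"
  unfolding orientation_def blit_def by auto

lemma talit_swap:
  "orientation E ori \<Longrightarrow> E v w \<Longrightarrow> {v, w} = {v0, w0} \<Longrightarrow>
    talit ori v0 w0 w v = negate (tblit ori v0 w0 v w)"
  unfolding orientation_def talit_def tblit_def by (auto simp: insert_commute)

lemma tblit_swap: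
  "orientation E ori \<Longrightarrow> E v w \<Longrightarrow> {v, w} = {v0, w0} \<Longrightarrow>
    tblit ori v0 w0 w v = negate (talit ori v0 w0 v w)"
  unfolding orientation_def talit_def tblit_def by (auto simp: insert_commute)

lemma talit_tblit_off_twist:
  "{v, w} \<noteq> {v0, w0} \<Longrightarrow> talit ori v0 w0 v w = alit ori v w \<and> tblit ori v0 w0 v w = blit ori v w"
  by (simp add: talit_def tblit_def)

lemma lits_complementary:
  "orientation E ori \<Longrightarrow> E v w \<Longrightarrow>
    {alit ori w v, blit ori w v} = negate ` {alit ori v w, blit ori v w}"
  by (simp add: alit_swap blit_swap)

lemma twisted_lits_complementary:
  assumes "orientation E ori" and "E v w"
  shows "{talit ori v0 w0 w v, tblit ori v0 w0 w v}
    = negate ` {talit ori v0 w0 v w, tblit ori v0 w0 v w}"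
proof (cases "{v, w} = {v0, w0}")
  case True
  then show ?thesis using talit_swap[OF assms True] tblit_swap[OF assms True] by auto
next
  case False
  then have "{w, v} \<noteq> {v0, w0}" by (simp add: insert_commute)
  with False show ?thesis
    using talit_tblit_off_twist lits_complementary[OF assms] by metis
qed

text \<open>Relative to \<open>F = \<bottom>\<close>, a symmetric F flips both literals of exactly the edges in F.\<close>

definition flip_valuation :: "('a \<Rightarrow> 'a \<Rightarrow> bool) \<Rightarrow> 'a \<times> 'a \<times> bool \<Rightarrow> bool" where
  "flip_valuation F = (\<lambda>(v, w, is_a). is_a \<noteq> F v w)"

lemma lit_val_flip_alit: "symp F \<Longrightarrow> lit_val (flip_valuation F) (alit ori v w) \<longleftrightarrow> ori v w \<noteq> F v w"
  by (auto simp: flip_valuation_def alit_def dest: sympD)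

lemma lit_val_flip_blit: "symp F \<Longrightarrow> lit_val (flip_valuation F) (blit ori v w) \<longleftrightarrow> ori v w = F v w"
  by (auto simp: flip_valuation_def blit_def dest: sympD)

lemma lit_val_flip_talit:
  "symp F \<Longrightarrow> lit_val (flip_valuation F) (talit ori v0 w0 v w)
    \<longleftrightarrow> (ori v w \<or> {v, w} = {v0, w0}) \<noteq> F v w"
  by (auto simp: flip_valuation_def talit_def alit_def dest: sympD)

lemma lit_val_flip_tblit:
  "symp F \<Longrightarrow> lit_val (flip_valuation F) (tblit ori v0 w0 v w)
    \<longleftrightarrow> (ori v w \<or> {v, w} = {v0, w0}) = F v w"
  by (auto simp: flip_valuation_def tblit_def blit_def dest: sympD)

lemma even_card_edges_if_satisfiable_f_G:
  assumes "simple_graph V E" and "even (card V)" and "orientation E ori"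
    and "satisfiable (f_G V E ori)"
  shows "even (card (edges V E))"
proof -
  have "finite V" using assms(1) unfolding simple_graph_def by simp
  obtain \<sigma> where "models \<sigma> (graph_formula V E (alit ori) (blit ori))"
    using assms(4) unfolding satisfiable_iff_models f_G_def by blast
  then have odd: "\<forall>v\<in>V. odd (card {w\<in>nbrs V E v. \<not> lit_val \<sigma> (alit ori v w)})"
    using models_graph_formula_iff[where la = "alit ori" and lb = "blit ori",
        OF assms(1) lits_complementary[OF assms(3)]]
    by blast
  have "even (\<Sum>v\<in>V. card {w\<in>nbrs V E v. \<not> lit_val \<sigma> (alit ori v w)})"
    using even_sum_iff_even_card[OF \<open>finite V\<close> odd] assms(2) by simp
  moreover have "(\<Sum>v\<in>V. card {w\<in>nbrs V E v. \<not> lit_val \<sigma> (alit ori v w)}) = card (edges V E)"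
    by (rule sum_card_nbrs_antisym[OF assms(1)]) (simp add: alit_swap[OF assms(3)])
  ultimately show ?thesis by simp
qed

lemma satisfiable_f_G_if_even_card_edges:
  assumes "simple_graph V E" and "connected_graph V E" and "even (card V)"
    and "orientation E ori" and "even (card (edges V E))"
  shows "satisfiable (f_G V E ori)"
proof -
  have "(\<Sum>v\<in>V. card {w\<in>nbrs V E v. \<not> ori v w}) = card (edges V E)"
    by (rule sum_card_nbrs_antisym[OF assms(1)]) (use assms(4) in \<open>auto simp: orientation_def\<close>)
  with assms(5) have "even (\<Sum>v\<in>V. card {w\<in>nbrs V E v. \<not> ori v w})" by simp
  from exists_parity_correction[OF assms(1-3) this]
  obtain F where "symp F" and F: "\<forall>v\<in>V. odd (card {w\<in>nbrs V E v. (\<not> ori v w) \<noteq> F v w})"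
    by blast
  have "\<forall>v w. E v w \<longrightarrow>
      lit_val (flip_valuation F) (alit ori v w) \<noteq> lit_val (flip_valuation F) (blit ori v w)"
    by (simp add: lit_val_flip_alit[OF \<open>symp F\<close>] lit_val_flip_blit[OF \<open>symp F\<close>])
  moreover have "\<forall>v\<in>V. odd (card {w\<in>nbrs V E v. \<not> lit_val (flip_valuation F) (alit ori v w)})"
    using F by (simp add: lit_val_flip_alit[OF \<open>symp F\<close>])
  ultimately have "models (flip_valuation F) (graph_formula V E (alit ori) (blit ori))"
    using models_graph_formula_iff[where la = "alit ori" and lb = "blit ori",
        OF assms(1) lits_complementary[OF assms(4)]]
    by blast
  then show ?thesis unfolding satisfiable_iff_models f_G_def by blast
qed

lemma odd_card_edges_if_satisfiable_twisted_f_G: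
  assumes "simple_graph V E" and "even (card V)" and "orientation E ori" and "E v0 w0"
    and "satisfiable (twisted_f_G V E ori v0 w0)"
  shows "odd (card (edges V E))"
proof -
  let ?la = "talit ori v0 w0" and ?lb = "tblit ori v0 w0"
  have "finite V" using assms(1) unfolding simple_graph_def by simp
  obtain \<sigma> where "models \<sigma> (graph_formula V E ?la ?lb)"
    using assms(5) unfolding satisfiable_iff_models twisted_f_G_def by blast
  then have distinct: "\<forall>v w. E v w \<longrightarrow> lit_val \<sigma> (?la v w) \<noteq> lit_val \<sigma> (?lb v w)"
    and odd: "\<forall>v\<in>V. odd (card {w\<in>nbrs V E v. \<not> lit_val \<sigma> (?la v w)})"
    using models_graph_formula_iff[where la = ?la and lb = ?lb,
        OF assms(1) twisted_lits_complementary[OF assms(3)]]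
    by blast+
  let ?g = "\<lambda>v w. \<not> lit_val \<sigma> (?la v w)"
  have even_sum: "even (\<Sum>v\<in>V. card {w\<in>nbrs V E v. ?g v w})"
    using even_sum_iff_even_card[OF \<open>finite V\<close> odd] assms(2) by simp
  have "(\<Sum>v\<in>V. card {w\<in>nbrs V E v. ?g v w}) + 1
      = of_bool (?g v0 w0) + of_bool (?g w0 v0) + card (edges V E)"
  proof (rule sum_card_nbrs_antisym_except[OF assms(1,4)])
    fix v w assume "E v w" and off: "{v, w} \<noteq> {v0, w0}"
    then have "{w, v} \<noteq> {v0, w0}" by (simp add: insert_commute)
    then show "?g w v \<longleftrightarrow> \<not> ?g v w"
      using talit_tblit_off_twist[OF off] alit_swap[OF assms(3) \<open>E v w\<close>]
        talit_tblit_off_twist[of w v] by simp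
  qed
  \<comment> \<open>On the twisted edge the two \<open>a\<close>-literals agree, so it contributes an even amount.\<close>
  moreover have "?g w0 v0 \<longleftrightarrow> ?g v0 w0"
    using talit_swap[OF assms(3,4)] distinct assms(4) by simp
  ultimately have "(\<Sum>v\<in>V. card {w\<in>nbrs V E v. ?g v w}) + 1
      = 2 * of_bool (?g v0 w0) + card (edges V E)"
    by simp
  then have "even (card (edges V E)) \<longleftrightarrow> even ((\<Sum>v\<in>V. card {w\<in>nbrs V E v. ?g v w}) + 1)"
    by simp
  with even_sum show ?thesis by simp
qed

lemma satisfiable_twisted_f_G_if_odd_card_edges:
  assumes "simple_graph V E" and "connected_graph V E" and "even (card V)"
    and "orientation E ori" and "E v0 w0" and "odd (card (edges V E))"
  shows "satisfiable (twisted_f_G V E ori v0 w0)"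
proof -
  let ?la = "talit ori v0 w0" and ?lb = "tblit ori v0 w0"
  let ?g = "\<lambda>v w. \<not> (ori v w \<or> {v, w} = {v0, w0})"
  have "(\<Sum>v\<in>V. card {w\<in>nbrs V E v. ?g v w}) + 1
      = of_bool (?g v0 w0) + of_bool (?g w0 v0) + card (edges V E)"
    by (rule sum_card_nbrs_antisym_except[OF assms(1,5)])
      (use assms(4) in \<open>auto simp: orientation_def insert_commute\<close>)
  then have "card (edges V E) = (\<Sum>v\<in>V. card {w\<in>nbrs V E v. ?g v w}) + 1"
    by (simp add: insert_commute)
  with assms(6) have "even (\<Sum>v\<in>V. card {w\<in>nbrs V E v. ?g v w})"
    by simp
  from exists_parity_correction[OF assms(1-3) this]
  obtain F where "symp F" and F: "\<forall>v\<in>V. odd (card {w\<in>nbrs V E v. ?g v w \<noteq> F v w})"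
    by blast
  have "\<forall>v w. E v w \<longrightarrow>
      lit_val (flip_valuation F) (?la v w) \<noteq> lit_val (flip_valuation F) (?lb v w)"
    by (simp add: lit_val_flip_talit[OF \<open>symp F\<close>] lit_val_flip_tblit[OF \<open>symp F\<close>])
  moreover have "{w\<in>nbrs V E v. \<not> lit_val (flip_valuation F) (?la v w)}
      = {w\<in>nbrs V E v. ?g v w \<noteq> F v w}" for v
    by (auto simp: lit_val_flip_talit[OF \<open>symp F\<close>])
  with F have "\<forall>v\<in>V. odd (card {w\<in>nbrs V E v. \<not> lit_val (flip_valuation F) (?la v w)})"
    by simp
  ultimately have "models (flip_valuation F) (graph_formula V E ?la ?lb)"
    using models_graph_formula_iff[where la = ?la and lb = ?lb,
        OF assms(1) twisted_lits_complementary[OF assms(4)]]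
    by blast
  then show ?thesis unfolding satisfiable_iff_models twisted_f_G_def by blast
qed

theorem lemma6:
  fixes V :: "'a set" and E :: "'a \<Rightarrow> 'a \<Rightarrow> bool" and ori :: "'a \<Rightarrow> 'a \<Rightarrow> bool"
    and v0 w0 :: 'a
  assumes "simple_graph V E"
    and "connected_graph V E"
    and "\<forall>v\<in>V. odd (degree V E v)"
    and "orientation E ori"
    and "E v0 w0"
  shows "(even (card (edges V E)) \<longrightarrow>
            satisfiable (f_G V E ori) \<and> \<not> satisfiable (twisted_f_G V E ori v0 w0))
       \<and> (odd (card (edges V E)) \<longrightarrow>
            \<not> satisfiable (f_G V E ori) \<and> satisfiable (twisted_f_G V E ori v0 w0))"
proof -
  have "even (card V)" by (rule even_card_if_odd_degrees[OF assms(1,3)])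
  then show ?thesis
    using satisfiable_f_G_if_even_card_edges[OF assms(1,2) _ assms(4)]
      even_card_edges_if_satisfiable_f_G[OF assms(1) _ assms(4)]
      satisfiable_twisted_f_G_if_odd_card_edges[OF assms(1,2) _ assms(4,5)]
      odd_card_edges_if_satisfiable_twisted_f_G[OF assms(1) _ assms(4,5)]
    by blast
qed

end
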